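(* Let $n,a,t\in\mathbb N$ with $t<a<n$. Let $\mathcal F,\mathcal G\subseteq\binom{[n]}{a}$ be such that $L_{t+1}(G)\not\preceq_{t+1}R_{t+1}(F)$ for all $F\in\mathcal F$, $G\in\mathcal G$. Let $\mathbf X$ and $\mathbf Y$ be independent random subsets of $[n]$, each distributed according to $\mu_{a/n}$. Then $$\Pr[\mathbf X\in\mathcal F,\ \mathbf Y\in\mathcal G]\le 4n\cdot\exp\left(-(a-t-1)^2/(20a)\right).$$
   Context: $[n]=\{1,\dots,n\}$, $\binom{[n]}{l}$ is the family of $l$-element subsets of $[n]$. For $X\subseteq[n]$ and $1\le i\le|X|$, $m(X,i)$ is the $i$-th smallest element of $X$. For $l\in[n]$, the partial order $\preceq_l$ on $\binom{[n]}{l}$ is defined by $X\preceq_l Y$ iff $m(X,i)\le m(Y,i)$ for all $1\le i\le l$. For $X\in\binom{[n]}{a}$ and $j\le a$, $L_j(X)$ is the set of the $j$ smallest elements of $X$ and $R_j(X)$ the set of the $j$ largest elements of $X$. For $p\in[0,1]$, $\mu_p$ is the probability measure on subsets of $[n]$ giving $X\subseteq[n]$ probability $p^{|X|}(1-p)^{n-|X|}$ (each element included independently with probability $p$). *)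

theory Defs
  imports Complex_Main
begin

definition mth :: "nat set \<Rightarrow> nat \<Rightarrow> nat" where
  "mth X i = sorted_list_of_set X ! (i - 1)"

definition preceq :: "nat \<Rightarrow> nat set \<Rightarrow> nat set \<Rightarrow> bool" where
  "preceq l X Y \<longleftrightarrow> finite X \<and> finite Y \<and> card X = l \<and> card Y = l \<and>
     (\<forall>i\<in>{1..l}. mth X i \<le> mth Y i)"

definition Lset :: "nat \<Rightarrow> nat set \<Rightarrow> nat set" where
  "Lset j X = set (take j (sorted_list_of_set X))"

definition Rset :: "nat \<Rightarrow> nat set \<Rightarrow> nat set" where
  "Rset j X = set (drop (card X - j) (sorted_list_of_set X))"

definition mu_weight :: "nat \<Rightarrow> real \<Rightarrow> nat set \<Rightarrow> real" where
  "mu_weight n p X = p ^ card X * (1 - p) ^ (n - card X)"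

text \<open>Pr[X \<in> F, Y \<in> G] for X, Y independent, each distributed as mu_p on subsets of [n]:
  the product measure of the pair (X,Y).\<close>
definition joint_prob :: "nat \<Rightarrow> real \<Rightarrow> nat set set \<Rightarrow> nat set set \<Rightarrow> real" where
  "joint_prob n p F G =
     (\<Sum>(X, Y) \<in> (F \<inter> Pow {1..n}) \<times> (G \<inter> Pow {1..n}). mu_weight n p X * mu_weight n p Y)"

end

theory Submission
  imports Defs
begin

text \<open>If \<open>\<not> L\<^sub>t\<^sub>+\<^sub>1(B) \<preceq> R\<^sub>t\<^sub>+\<^sub>1(A)\<close> for \<open>a\<close>-sets \<open>A\<close> and \<open>B\<close>, then some prefix \<open>[x]\<close> of \<open>[n]\<close>
  contains at least \<open>a - t\<close> more elements of \<open>A\<close> than of \<open>B\<close>: take \<open>x\<close> to be the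
  \<open>i\<close>-th element of \<open>R\<^sub>t\<^sub>+\<^sub>1(A)\<close> for an index \<open>i\<close> where the comparison fails. For independent \<open>\<mu>\<^sub>p\<close>-random
  \<open>X\<close>, \<open>Y\<close> the difference \<open>|X \<inter> [x]| - |Y \<inter> [x]|\<close> is a sum of \<open>x\<close> independent centred
  variables, so its exponential moment is small; an exponential Markov bound with parameter
  \<open>l = (a - t) / (4 a)\<close> and a union bound over the \<open>n\<close> prefixes give the estimate.\<close>

lemma sorted_list_of_set_Lset: "sorted_list_of_set (Lset j X) = take j (sorted_list_of_set X)"
  unfolding Lset_def
  by (simp add: sorted_list_of_set_sort_remdups distinct_remdups_id sorted_sort_id)

lemma sorted_list_of_set_Rset:
  "sorted_list_of_set (Rset j X) = drop (card X - j) (sorted_list_of_set X)"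
  unfolding Rset_def
  by (simp add: sorted_list_of_set_sort_remdups distinct_remdups_id sorted_sort_id)

lemma card_Lset: "j \<le> card X \<Longrightarrow> card (Lset j X) = j"
  by (simp add: Lset_def distinct_card)

lemma card_Rset: "j \<le> card X \<Longrightarrow> card (Rset j X) = j"
  by (simp add: Rset_def distinct_card)

lemma mth_Lset: "1 \<le> i \<Longrightarrow> i \<le> j \<Longrightarrow> mth (Lset j X) i = mth X i"
  by (simp add: mth_def sorted_list_of_set_Lset)

lemma mth_Rset: "1 \<le> i \<Longrightarrow> j \<le> card X \<Longrightarrow> mth (Rset j X) i = mth X (card X - j + i)"
  by (simp add: mth_def sorted_list_of_set_Rset nth_drop)

lemma mth_mem: "finite A \<Longrightarrow> 1 \<le> i \<Longrightarrow> i \<le> card A \<Longrightarrow> mth A i \<in> A"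
  by (metis Suc_le_eq Suc_pred' le_eq_less_or_eq length_sorted_list_of_set less_le_trans mth_def
      nth_mem set_sorted_list_of_set zero_less_one)

lemma Int_lessThan_nth_sorted_list_of_set:
  assumes "finite A" and "k < card A"
  shows "A \<inter> {..<sorted_list_of_set A ! k} = set (take k (sorted_list_of_set A))"
proof -
  define xs where "xs = sorted_list_of_set A"
  have xs: "sorted_wrt (<) xs" "set xs = A" "length xs = card A"
    using assms(1) by (auto simp: xs_def)
  have "xs ! m < xs ! k \<longleftrightarrow> m < k" if "m < length xs" for m
    using xs(1) that assms(2) xs(3) sorted_wrt_nth_less[OF xs(1)]
    by (metis less_asym' linorder_neqE_nat)
  then have "A \<inter> {..<xs ! k} = {xs ! m | m. m < length xs \<and> m < k}"
    using xs(2) by (auto simp: in_set_conv_nth) blast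
  also have "\<dots> = set (take k xs)"
    using assms(2) xs(3) by (fastforce simp: in_set_conv_nth)
  finally show ?thesis by (simp add: xs_def)
qed

lemma card_Int_lessThan_mth:
  assumes "finite A" and "1 \<le> i" and "i \<le> card A"
  shows "card (A \<inter> {..<mth A i}) = i - 1"
  using assms Int_lessThan_nth_sorted_list_of_set[of A "i - 1"]
  by (simp add: mth_def distinct_card)

lemma card_Int_atMost_mth:
  assumes "finite A" and "1 \<le> i" and "i \<le> card A"
  shows "card (A \<inter> {..mth A i}) = i"
proof -
  have "A \<inter> {..mth A i} = insert (mth A i) (A \<inter> {..<mth A i})"
    using mth_mem[OF assms] by auto
  then show ?thesis
    using assms card_Int_lessThan_mth[OF assms] by simp
qed

lemma card_Int_atMost_less_mth:
  assumes "finite A" and "1 \<le> i" and "i \<le> card A" and "x < mth A i"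
  shows "card (A \<inter> {..x}) < i"
proof -
  have "card (A \<inter> {..x}) \<le> card (A \<inter> {..<mth A i})"
    using assms by (intro card_mono) auto
  then show ?thesis
    using card_Int_lessThan_mth[OF assms(1-3)] assms(2) by simp
qed

lemma prefix_surplus_if_not_preceq:
  assumes "finite A" and "finite B" and "card A = a" and "card B = a" and "t < a"
    and "\<not> preceq (t + 1) (Lset (t + 1) B) (Rset (t + 1) A)"
  shows "\<exists>x\<in>A. card (B \<inter> {..x}) + (a - t) \<le> card (A \<inter> {..x})"
proof -
  have "finite (Lset j X)" "finite (Rset j X)" for j X
    by (simp_all add: Lset_def Rset_def)
  with assms obtain i where i: "1 \<le> i" "i \<le> t + 1"
    and less: "mth (Rset (t + 1) A) i < mth (Lset (t + 1) B) i"
    unfolding preceq_def by (auto simp: card_Lset card_Rset)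
  define x where "x = mth A (a - (t + 1) + i)"
  have "x < mth B i"
    using less i assms(3,5) by (simp add: x_def mth_Lset mth_Rset)
  then have "card (B \<inter> {..x}) < i"
    using card_Int_atMost_less_mth assms i by simp
  moreover have "card (A \<inter> {..x}) = a - (t + 1) + i"
    unfolding x_def using card_Int_atMost_mth assms i by simp
  moreover have "x \<in> A"
    unfolding x_def using mth_mem assms i by simp
  ultimately show ?thesis
    using i assms(5) by (intro bexI[of _ x]) auto
qed

lemma sum_mu_weight_power_card_Int:
  fixes p c :: real
  assumes "J \<subseteq> {1..n}"
  shows "(\<Sum>S\<in>Pow {1..n}. mu_weight n p S * c ^ card (S \<inter> J)) = (p * c + 1 - p) ^ card J"
proof -
  have term_eq: "(\<Prod>i\<in>S. p * (if i \<in> J then c else 1)) * (\<Prod>i\<in>{1..n} - S. 1 - p)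
      = mu_weight n p S * c ^ card (S \<inter> J)" if "S \<in> Pow {1..n}" for S
  proof -
    have "finite S" using that finite_subset by auto
    then have "(\<Prod>i\<in>S. p * (if i \<in> J then c else 1)) = p ^ card S * c ^ card (S \<inter> J)"
      by (simp add: prod.distrib prod.inter_restrict[symmetric])
    moreover have "(\<Prod>i\<in>{1..n} - S. 1 - p) = (1 - p) ^ (n - card S)"
      using that \<open>finite S\<close> by (simp add: card_Diff_subset)
    ultimately show ?thesis by (simp add: mu_weight_def)
  qed
  have "(p * c + 1 - p) ^ card J = (\<Prod>i\<in>{1..n}. if i \<in> J then p * c + 1 - p else 1)"
    using assms by (simp add: prod.inter_restrict[symmetric] Int_absorb1)
  also have "\<dots> = (\<Prod>i\<in>{1..n}. p * (if i \<in> J then c else 1) + (1 - p))"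
    by (rule prod.cong) auto
  also have "\<dots> = (\<Sum>S\<in>Pow {1..n}. (\<Prod>i\<in>S. p * (if i \<in> J then c else 1)) * (\<Prod>i\<in>{1..n} - S. 1 - p))"
    by (rule prod_add) simp
  also have "\<dots> = (\<Sum>S\<in>Pow {1..n}. mu_weight n p S * c ^ card (S \<inter> J))"
    using term_eq by (rule sum.cong[OF refl])
  finally show ?thesis ..
qed

lemma sum_mu_weight_exp_card_Int_diff:
  fixes p l s :: real
  assumes "J \<subseteq> {1..n}"
  shows "(\<Sum>(X, Y)\<in>Pow {1..n} \<times> Pow {1..n}. mu_weight n p X * mu_weight n p Y *
            exp (l * (real (card (X \<inter> J)) - real (card (Y \<inter> J)) - s)))
       = exp (- l * s) * ((p * exp l + 1 - p) * (p * exp (- l) + 1 - p)) ^ card J"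
proof -
  have exp_split: "exp (l * (real (card (X \<inter> J)) - real (card (Y \<inter> J)) - s))
       = exp (- l * s) * (exp l ^ card (X \<inter> J) * exp (- l) ^ card (Y \<inter> J))" for X Y
    by (simp add: exp_add[symmetric] exp_of_nat_mult[symmetric] algebra_simps)
  have "(\<Sum>(X, Y)\<in>Pow {1..n} \<times> Pow {1..n}. mu_weight n p X * mu_weight n p Y *
            exp (l * (real (card (X \<inter> J)) - real (card (Y \<inter> J)) - s)))
      = exp (- l * s) * (\<Sum>X\<in>Pow {1..n}. \<Sum>Y\<in>Pow {1..n}.
          (mu_weight n p X * exp l ^ card (X \<inter> J)) * (mu_weight n p Y * exp (- l) ^ card (Y \<inter> J)))"
    by (simp add: exp_split sum.cartesian_product[symmetric] sum_distrib_left mult_ac)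
  also have "\<dots> = exp (- l * s) * ((\<Sum>X\<in>Pow {1..n}. mu_weight n p X * exp l ^ card (X \<inter> J)) *
                        (\<Sum>Y\<in>Pow {1..n}. mu_weight n p Y * exp (- l) ^ card (Y \<inter> J)))"
    by (simp only: sum_product)
  also have "\<dots> = exp (- l * s) * ((p * exp l + 1 - p) * (p * exp (- l) + 1 - p)) ^ card J"
    unfolding sum_mu_weight_power_card_Int[OF assms] by (simp add: power_mult_distrib)
  finally show ?thesis .
qed

lemma bernoulli_mgf_product_le:
  fixes p l :: real
  assumes "0 \<le> p" and "p \<le> 1" and "0 \<le> l"
  shows "(p * exp l + 1 - p) * (p * exp (- l) + 1 - p) \<le> exp (p * (exp l - 1)\<^sup>2)"
proof -
  define E where "E = exp l"
  have E: "1 \<le> E" "exp (- l) = 1 / E"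
    using assms(3) by (simp_all add: E_def exp_minus field_simps)
  have "(p * E + 1 - p) * (p / E + 1 - p) = 1 + p * ((1 - p) / E) * (E - 1)\<^sup>2"
    using E by (simp add: field_simps power2_eq_square)
  also have "\<dots> \<le> 1 + p * (E - 1)\<^sup>2"
    using assms E by (intro add_left_mono mult_right_mono mult_left_le) auto
  also have "\<dots> \<le> exp (p * (E - 1)\<^sup>2)"
    by (rule exp_ge_add_one_self)
  finally show ?thesis
    by (simp add: E(2) flip: E_def)
qed

lemma joint_prob_le_sum_exp_moments:
  fixes p l s :: real and \<J> :: "nat set set"
  assumes "0 \<le> p" and "p \<le> 1" and "0 \<le> l" and "finite \<J>" and "\<forall>J\<in>\<J>. J \<subseteq> {1..n}"
    and surplus: "\<forall>A\<in>F \<inter> Pow {1..n}. \<forall>B\<in>G \<inter> Pow {1..n}.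
                    \<exists>J\<in>\<J>. real (card (B \<inter> J)) + s \<le> real (card (A \<inter> J))"
  shows "joint_prob n p F G
           \<le> (\<Sum>J\<in>\<J>. exp (- l * s) * ((p * exp l + 1 - p) * (p * exp (- l) + 1 - p)) ^ card J)"
proof -
  let ?P = "Pow {1..n}"
  let ?w = "mu_weight n p"
  \<comment> \<open>\<open>D X Y \<ge> 1\<close> on \<open>F \<times> G\<close> is the exponential Markov inequality combined with a union bound.\<close>
  define D where "D X Y = (\<Sum>J\<in>\<J>. exp (l * (real (card (X \<inter> J)) - real (card (Y \<inter> J)) - s)))"
    for X Y
  have w_nonneg: "0 \<le> ?w X" for X
    using assms(1,2) by (simp add: mu_weight_def)
  have D_nonneg: "0 \<le> D X Y" for X Y
    unfolding D_def by (intro sum_nonneg) auto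
  have D_ge_1: "1 \<le> D X Y" if "X \<in> F \<inter> ?P" "Y \<in> G \<inter> ?P" for X Y
  proof -
    from surplus[rule_format, OF that] obtain J
      where J: "J \<in> \<J>" "real (card (Y \<inter> J)) + s \<le> real (card (X \<inter> J))" ..
    then have "1 \<le> exp (l * (real (card (X \<inter> J)) - real (card (Y \<inter> J)) - s))"
      using assms(3) by simp
    also have "\<dots> \<le> D X Y"
      unfolding D_def using J(1) assms(4) by (intro member_le_sum) auto
    finally show ?thesis .
  qed
  have "joint_prob n p F G = (\<Sum>(X, Y)\<in>(F \<inter> ?P) \<times> (G \<inter> ?P). ?w X * ?w Y)"
    by (simp add: joint_prob_def)
  also have "\<dots> \<le> (\<Sum>(X, Y)\<in>(F \<inter> ?P) \<times> (G \<inter> ?P). ?w X * ?w Y * D X Y)"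
    using mult_left_mono[OF D_ge_1 mult_nonneg_nonneg[OF w_nonneg w_nonneg]]
    by (intro sum_mono) auto
  also have "\<dots> \<le> (\<Sum>(X, Y)\<in>?P \<times> ?P. ?w X * ?w Y * D X Y)"
    using w_nonneg D_nonneg by (intro sum_mono2) auto
  also have "\<dots> = (\<Sum>J\<in>\<J>. \<Sum>(X, Y)\<in>?P \<times> ?P. ?w X * ?w Y *
                     exp (l * (real (card (X \<inter> J)) - real (card (Y \<inter> J)) - s)))"
    unfolding D_def sum_distrib_left case_prod_unfold by (rule sum.swap)
  also have "\<dots> = (\<Sum>J\<in>\<J>. exp (- l * s) * ((p * exp l + 1 - p) * (p * exp (- l) + 1 - p)) ^ card J)"
    using assms(5) by (intro sum.cong refl sum_mu_weight_exp_card_Int_diff) auto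
  finally show ?thesis .
qed

lemma joint_prob_le_card_exp:
  fixes p l s :: real and \<J> :: "nat set set"
  assumes "0 \<le> p" and "p \<le> 1" and "0 \<le> l" and "finite \<J>" and "\<forall>J\<in>\<J>. J \<subseteq> {1..n}"
    and "\<forall>A\<in>F \<inter> Pow {1..n}. \<forall>B\<in>G \<inter> Pow {1..n}.
           \<exists>J\<in>\<J>. real (card (B \<inter> J)) + s \<le> real (card (A \<inter> J))"
  shows "joint_prob n p F G \<le> real (card \<J>) * exp (- l * s + real n * p * (exp l - 1)\<^sup>2)"
proof -
  have "exp (- l * s) * ((p * exp l + 1 - p) * (p * exp (- l) + 1 - p)) ^ card J
          \<le> exp (- l * s + real n * p * (exp l - 1)\<^sup>2)" if "J \<in> \<J>" for J
  proof -
    have "0 \<le> p * exp l" "0 \<le> p * exp (- l)"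
      using assms(1) by simp_all
    then have "0 \<le> p * exp l + 1 - p" "0 \<le> p * exp (- l) + 1 - p"
      using assms(2) by linarith+
    then have "((p * exp l + 1 - p) * (p * exp (- l) + 1 - p)) ^ card J
                 \<le> exp (p * (exp l - 1)\<^sup>2) ^ card J"
      by (intro power_mono bernoulli_mgf_product_le assms(1-3)) (rule mult_nonneg_nonneg)
    also have "\<dots> = exp (real (card J) * (p * (exp l - 1)\<^sup>2))"
      by (simp add: exp_of_nat_mult)
    also have "\<dots> \<le> exp (real n * p * (exp l - 1)\<^sup>2)"
    proof -
      have "card J \<le> n"
        using card_mono[of "{1..n}" J] that assms(5) by auto
      then show ?thesis
        using assms(1) mult_right_mono[of "real (card J)" "real n" "p * (exp l - 1)\<^sup>2"]
        by (simp add: mult.assoc)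
    qed
    finally have "exp (- l * s) * ((p * exp l + 1 - p) * (p * exp (- l) + 1 - p)) ^ card J
                    \<le> exp (- l * s) * exp (real n * p * (exp l - 1)\<^sup>2)"
      by (rule mult_left_mono) simp
    then show ?thesis
      by (simp only: exp_add)
  qed
  then have "(\<Sum>J\<in>\<J>. exp (- l * s) * ((p * exp l + 1 - p) * (p * exp (- l) + 1 - p)) ^ card J)
               \<le> (\<Sum>J\<in>\<J>. exp (- l * s + real n * p * (exp l - 1)\<^sup>2))"
    by (rule sum_mono)
  with joint_prob_le_sum_exp_moments[OF assms] show ?thesis
    by simp
qed

lemma exp_minus_one_le:
  fixes l :: real
  assumes "0 \<le> l" and "l \<le> 1 / 4"
  shows "exp l - 1 \<le> 5 / 4 * l"
proof -
  have "exp l \<le> 1 + l + l\<^sup>2"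
    using assms by (intro exp_bound) auto
  moreover have "l\<^sup>2 \<le> l / 4"
    using assms mult_left_mono[of l "1 / 4" l] by (simp add: power2_eq_square)
  ultimately show ?thesis by simp
qed

text \<open>With \<open>l = s / (4 a)\<close> the exponent is \<open>- 39 s\<^sup>2 / (256 a)\<close>; the constant \<open>20\<close> is slack
  enough to absorb the shift from \<open>s\<close> to \<open>s - 1\<close>.\<close>

lemma chernoff_exponent_le:
  fixes a s :: real
  assumes "1 \<le> s" and "s \<le> a"
  shows "- (s / (4 * a)) * s + a * (exp (s / (4 * a)) - 1)\<^sup>2 \<le> - (s - 1)\<^sup>2 / (20 * a)"
proof -
  define l where "l = s / (4 * a)"
  have a: "0 < a" using assms by simp
  have l: "0 \<le> l" "l \<le> 1 / 4"
    using assms a by (auto simp: l_def field_simps)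
  have "(exp l - 1)\<^sup>2 \<le> (5 / 4 * l)\<^sup>2"
    using l exp_minus_one_le[OF l] by (intro power_mono) auto
  then have "- l * s + a * (exp l - 1)\<^sup>2 \<le> - l * s + a * (5 / 4 * l)\<^sup>2"
    using a by simp
  also have "\<dots> = - 39 * s\<^sup>2 / (256 * a)"
    using a by (simp add: l_def field_simps power2_eq_square)
  also have "\<dots> \<le> - (s - 1)\<^sup>2 / (20 * a)"
  proof -
    have "(s - 1)\<^sup>2 \<le> s\<^sup>2"
      using assms by (intro power_mono) auto
    then have "(s - 1)\<^sup>2 * 256 \<le> 39 * s\<^sup>2 * 20"
      using zero_le_power2[of s] by linarith
    then show ?thesis
      using a by (simp add: field_simps)
  qed
  finally show ?thesis by (simp add: l_def)
qed

theorem lemma4: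
  fixes n a t :: nat and F G :: "nat set set"
  assumes "t < a" and "a < n"
    and "F \<subseteq> {S. S \<subseteq> {1..n} \<and> card S = a}"
    and "G \<subseteq> {S. S \<subseteq> {1..n} \<and> card S = a}"
    and "\<forall>A\<in>F. \<forall>B\<in>G. \<not> preceq (t + 1) (Lset (t + 1) B) (Rset (t + 1) A)"
  shows "joint_prob n (real a / real n) F G
           \<le> 4 * real n * exp (- (real (a - t - 1))\<^sup>2 / (20 * real a))"
proof -
  define s where "s = real (a - t)"
  define l where "l = s / (4 * real a)"
  define \<J> where "\<J> = (\<lambda>x. {1..x}) ` {1..n}"
  have surplus: "\<forall>A\<in>F \<inter> Pow {1..n}. \<forall>B\<in>G \<inter> Pow {1..n}.
                   \<exists>J\<in>\<J>. real (card (B \<inter> J)) + s \<le> real (card (A \<inter> J))"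
  proof (intro ballI)
    fix A B assume A: "A \<in> F \<inter> Pow {1..n}" and B: "B \<in> G \<inter> Pow {1..n}"
    then have "finite A" "finite B"
      by (auto intro: finite_subset)
    with A B assms obtain x where "x \<in> A" and "card (B \<inter> {..x}) + (a - t) \<le> card (A \<inter> {..x})"
      using prefix_surplus_if_not_preceq[of A B a t] by auto
    moreover have "A \<inter> {..x} = A \<inter> {1..x}" "B \<inter> {..x} = B \<inter> {1..x}"
      using A B by auto
    ultimately show "\<exists>J\<in>\<J>. real (card (B \<inter> J)) + s \<le> real (card (A \<inter> J))"
      using A assms(1) unfolding \<J>_def s_def by (intro bexI[of _ "{1..x}"]) auto
  qed
  have "joint_prob n (real a / real n) F G
          \<le> real (card \<J>) * exp (- l * s + real n * (real a / real n) * (exp l - 1)\<^sup>2)"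
    using assms(1,2) surplus unfolding \<J>_def l_def s_def
    by (intro joint_prob_le_card_exp) auto
  also have "\<dots> \<le> real n * exp (- (s - 1)\<^sup>2 / (20 * real a))"
    using assms(1,2) card_image_le[of "{1..n}" "\<lambda>x. {1..x}"] chernoff_exponent_le[of s "real a"]
    by (intro mult_mono) (auto simp: \<J>_def l_def s_def)
  also have "\<dots> \<le> 4 * real n * exp (- (real (a - t - 1))\<^sup>2 / (20 * real a))"
  proof -
    have "s - 1 = real (a - t - 1)"
      using assms(1) by (simp add: s_def)
    then show ?thesis by simp
  qed
  finally show ?thesis .
qed

end
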